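(* Let ${\bf p}=({\bf p}_1,\dots,{\bf p}_n)$ and ${\bf q}=({\bf q}_1,\dots,{\bf q}_m)$ be configurations in $\mathbb R^d$. Suppose there are subconfigurations ${\bf p}'\subset{\bf p}$ and ${\bf q}'\subset{\bf q}$ such that the combined set of points of $({\bf p}',{\bf q}')$ is in general position in $\mathbb R^d$ and there is no quadric strictly separating ${\bf p}'$ and ${\bf q}'$. Then $(K(n,m),{\bf p},{\bf q})$ is universally rigid, and the affine span of ${\bf p}$ and the affine span of ${\bf q}$ are each all of $\mathbb R^d$.
   Context: $(K(n,m),{\bf p},{\bf q})$ is the framework with bars joining ${\bf p}_i$ to ${\bf q}_j$ for all $i,j$. It is universally rigid if every configuration in any $\mathbb R^D$ with the same bar lengths has all pairwise distances equal to those of the original. A configuration in $\mathbb R^d$ is in general position if every $k+1$ of its points span a $k$-dimensional affine subspace, for $k=1,\dots,d$. For ${\bf x}\in\mathbb R^d$, $\hat{\bf x}$ is ${\bf x}$ with a $1$ appended. Point sets ${\bf a}$, ${\bf b}$ are strictly separated by a quadric if there is a symmetric $(d+1)\times(d+1)$ matrix $A$ with $\hat{\bf b}^tA\hat{\bf b}<0<\hat{\bf a}^tA\hat{\bf a}$ for all ${\bf a}$ in the first set and ${\bf b}$ in the second. *)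

theory Defs
  imports "HOL-Analysis.Analysis"
begin

text \<open>A point of R^D is represented as a function nat => real, only the first D
  coordinates (indices 0..D-1) being relevant; squared Euclidean distance in R^D.\<close>
definition sqdistD :: "nat \<Rightarrow> (nat \<Rightarrow> real) \<Rightarrow> (nat \<Rightarrow> real) \<Rightarrow> real" where
  "sqdistD D x y = (\<Sum>k<D. (x k - y k)^2)"

definition bip_universally_rigid ::
  "nat \<Rightarrow> nat \<Rightarrow> (nat \<Rightarrow> real^'d) \<Rightarrow> (nat \<Rightarrow> real^'d) \<Rightarrow> bool" where
  "bip_universally_rigid n m p q \<longleftrightarrow>
     (\<forall>D::nat. \<forall>P Q :: nat \<Rightarrow> nat \<Rightarrow> real.
        (\<forall>i<n. \<forall>j<m. sqdistD D (P i) (Q j) = (dist (p i) (q j))^2) \<longrightarrow>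
        (\<forall>i<n. \<forall>i'<n. sqdistD D (P i) (P i') = (dist (p i) (p i'))^2) \<and>
        (\<forall>j<m. \<forall>j'<m. sqdistD D (Q j) (Q j') = (dist (q j) (q j'))^2) \<and>
        (\<forall>i<n. \<forall>j<m. sqdistD D (P i) (Q j) = (dist (p i) (q j))^2))"

definition general_position :: "'a set \<Rightarrow> ('a \<Rightarrow> real^'d) \<Rightarrow> bool" where
  "general_position S x \<longleftrightarrow>
     (\<forall>T\<subseteq>S. 2 \<le> card T \<and> card T \<le> CARD('d) + 1 \<longrightarrow>
        inj_on x T \<and> aff_dim (x ` T) = int (card T) - 1)"

definition hat :: "real^'d \<Rightarrow> real^('d option)" where
  "hat x = (\<chi> i. case i of None \<Rightarrow> 1 | Some k \<Rightarrow> x $ k)"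

definition strictly_separated_by_quadric :: "(real^'d) set \<Rightarrow> (real^'d) set \<Rightarrow> bool" where
  "strictly_separated_by_quadric A B \<longleftrightarrow>
     (\<exists>M :: real^('d option)^('d option). transpose M = M \<and>
        (\<forall>b\<in>B. hat b \<bullet> (M *v hat b) < 0) \<and> (\<forall>a\<in>A. 0 < hat a \<bullet> (M *v hat a)))"

end

theory Submission
  imports Defs
begin

text \<open>By Gordan's alternative, the absence of a separating quadric yields weights
  \<lambda>, \<mu> \<ge> 0 on p' and q' such that the moment matrices \<Sum> \<lambda>(a) \<hat>p(a) \<hat>p(a)^T and
  \<Sum> \<mu>(b) \<hat>q(b) \<hat>q(b)^T agree; general position forces the supports of \<lambda> and of \<mu> to
  affinely span R^d. With G the common moment matrix, the weights
  \<omega>(a,b) = \<lambda>(a) \<mu>(b) \<hat>p(a)^T G^-1 \<hat>q(b) form a stress whose energy \<Sum> \<omega>(a,b) (x(a) - y(b))^2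
  is the weighted residual of the least-squares affine fit of y on the q's; so it is nonnegative
  and vanishes on affine data. A configuration with the same bar lengths therefore has zero
  energy, so its coordinates are affine on the supports. The resulting affine map preserves the
  distances between two affinely spanning sets, hence is an isometry, and then it is forced on
  all remaining points as well.\<close>

definition lin_part :: "real^('d option) \<Rightarrow> real^'d" where
  "lin_part t = (\<chi> k. t $ Some k)"

definition affine_functional :: "real^'d \<Rightarrow> real \<Rightarrow> real^('d option)" where
  "affine_functional w c = (\<chi> i. case i of None \<Rightarrow> c | Some k \<Rightarrow> w $ k)"

lemma hat_nth [simp]: "hat x $ Some k = x $ k" "hat x $ None = 1"
  by (auto simp: hat_def)

lemma inner_hat: "t \<bullet> hat x = lin_part t \<bullet> x + t $ None"
proof -
  have "t \<bullet> hat x = (\<Sum>i\<in>insert None (range Some). t $ i * hat x $ i)"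
    by (simp only: inner_vec_def UNIV_option_conv inner_real_def)
  also have "\<dots> = t $ None + (\<Sum>i\<in>range Some. t $ i * hat x $ i)"
    by (subst sum.insert) auto
  also have "(\<Sum>i\<in>range Some. t $ i * hat x $ i) = (\<Sum>k\<in>UNIV. t $ Some k * x $ k)"
    by (subst sum.reindex) (auto simp: inj_on_def)
  finally show ?thesis by (simp add: inner_vec_def lin_part_def)
qed

lemma lin_part_affine_functional [simp]: "lin_part (affine_functional w c) = w"
  and affine_functional_None [simp]: "affine_functional w c $ None = c"
  by (auto simp: lin_part_def affine_functional_def vec_eq_iff)

lemma inner_affine_functional_hat: "affine_functional w c \<bullet> hat x = w \<bullet> x + c"
  by (simp add: inner_hat)

lemma vec_option_eq_0_iff: "t = 0 \<longleftrightarrow> lin_part t = 0 \<and> t $ None = 0"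
  by (auto simp: lin_part_def vec_eq_iff split: option.splits) (metis option.exhaust)

lemma affine_function_vanishing_on_spanning_set:
  fixes w :: "real^'d"
  assumes "affine hull Y = UNIV" and "\<And>y. y \<in> Y \<Longrightarrow> w \<bullet> y + c = 0"
  shows "w = 0" and "c = 0"
proof -
  have "Y \<subseteq> {y. w \<bullet> y = - c}"
    using assms(2) by (force simp: eq_neg_iff_add_eq_0)
  then have "affine hull Y \<subseteq> {y. w \<bullet> y = - c}"
    by (rule hull_minimal) (rule affine_hyperplane)
  then have "w \<bullet> y = - c" for y
    using assms(1) by auto
  from this[of 0] this[of w] show "w = 0" "c = 0" by simp_all
qed

lemma hat_functional_separating_point:
  fixes u :: "real^'d"
  assumes "u \<notin> affine hull S"
  obtains t where "t \<bullet> hat u \<noteq> 0" and "\<And>x. x \<in> S \<Longrightarrow> t \<bullet> hat x = 0"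
proof (cases "S = {}")
  case True
  then show ?thesis
    by (intro that[of "affine_functional 0 1"]) (simp_all add: inner_affine_functional_hat)
next
  case False
  define F where "F = affine hull S"
  have F: "closed F" "convex F" "affine F" "F \<noteq> {}"
    using False by (auto simp: F_def affine_imp_convex)
  define z where "z = closest_point F u"
  have "z \<in> F"
    using closest_point_in_set[OF F(1,4)] by (simp add: z_def)
  define w where "w = u - z"
  have closest: "w \<bullet> (x - z) \<le> 0" if "x \<in> F" for x
    using closest_point_dot[OF F(2,1) that] by (simp add: w_def z_def)
  \<comment> \<open>Reflecting x through z stays in the affine set F, so both signs of the inequality hold.\<close>
  have orth: "w \<bullet> (x - z) = 0" if "x \<in> F" for x
  proof -
    have "(-1) *\<^sub>R x + 2 *\<^sub>R z \<in> F"
      using F(3)[unfolded affine_def, rule_format, of x z "-1" 2] that \<open>z \<in> F\<close> by simp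
    then have "w \<bullet> (((-1) *\<^sub>R x + 2 *\<^sub>R z) - z) \<le> 0"
      by (rule closest)
    then have "0 \<le> w \<bullet> (x - z)"
      by (simp add: scaleR_2 algebra_simps)
    with closest[OF that] show ?thesis by linarith
  qed
  have "w \<noteq> 0"
    using assms \<open>z \<in> F\<close> by (auto simp: F_def w_def)
  have t_hat: "affine_functional w (- (w \<bullet> z)) \<bullet> hat x = w \<bullet> (x - z)" for x
    by (simp add: inner_affine_functional_hat inner_diff_right)
  show ?thesis
  proof (rule that)
    show "affine_functional w (- (w \<bullet> z)) \<bullet> hat u \<noteq> 0"
      using \<open>w \<noteq> 0\<close> by (simp add: t_hat flip: w_def)
    show "affine_functional w (- (w \<bullet> z)) \<bullet> hat x = 0" if "x \<in> S" for x
      using orth[of x] that by (simp add: t_hat F_def hull_inc)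
  qed
qed

lemma affine_hull_eq_UNIV_iff_hat:
  "affine hull X = UNIV \<longleftrightarrow> (\<forall>t. (\<forall>x\<in>X. t \<bullet> hat x = 0) \<longrightarrow> t = 0)"
proof (intro iffI allI impI)
  fix t assume span: "affine hull X = UNIV" and "\<forall>x\<in>X. t \<bullet> hat x = 0"
  then have "lin_part t \<bullet> x + t $ None = 0" if "x \<in> X" for x
    using that by (simp add: inner_hat)
  from affine_function_vanishing_on_spanning_set[OF span this] show "t = 0"
    by (simp add: vec_option_eq_0_iff)
next
  assume hat_span: "\<forall>t. (\<forall>x\<in>X. t \<bullet> hat x = 0) \<longrightarrow> t = 0"
  show "affine hull X = UNIV"
  proof (rule ccontr)
    assume "affine hull X \<noteq> UNIV"
    then obtain u where "u \<notin> affine hull X" by blast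
    then obtain t where "t \<bullet> hat u \<noteq> 0" "\<And>x. x \<in> X \<Longrightarrow> t \<bullet> hat x = 0"
      using hat_functional_separating_point by blast
    with hat_span have "t = 0" by blast
    with \<open>t \<bullet> hat u \<noteq> 0\<close> show False by simp
  qed
qed

definition outer :: "real^'n \<Rightarrow> real^'n^'n" where
  "outer t = (\<chi> i j. t $ i * t $ j)"

lemma quadratic_form_eq_sum:
  fixes M :: "real^'n^'n"
  shows "t \<bullet> (M *v t) = (\<Sum>i\<in>UNIV. \<Sum>j\<in>UNIV. M $ i $ j * t $ i * t $ j)"
  by (simp add: inner_vec_def matrix_vector_mult_def sum_distrib_left mult_ac)

lemma inner_outer: "M \<bullet> outer t = t \<bullet> (M *v t)"
  unfolding quadratic_form_eq_sum by (simp add: inner_vec_def outer_def mult_ac)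

lemma inner_outer_bilinear: "(\<chi> i j. s $ i * u $ j) \<bullet> outer t = (s \<bullet> t) * (u \<bullet> t)"
  by (simp add: inner_vec_def outer_def sum_product mult_ac)

lemma quadratic_form_transpose:
  fixes M :: "real^'n^'n"
  shows "t \<bullet> (transpose M *v t) = t \<bullet> (M *v t)"
proof -
  have "t \<bullet> (transpose M *v t) = (\<Sum>i\<in>UNIV. \<Sum>j\<in>UNIV. M $ j $ i * t $ i * t $ j)"
    by (simp add: quadratic_form_eq_sum transpose_def)
  also have "\<dots> = (\<Sum>j\<in>UNIV. \<Sum>i\<in>UNIV. M $ j $ i * t $ i * t $ j)"
    by (rule sum.swap)
  finally show ?thesis
    by (simp add: quadratic_form_eq_sum mult_ac)
qed

lemma quadratic_form_symmetrize:
  fixes N :: "real^'n^'n"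
  shows "t \<bullet> (((1/2) *\<^sub>R (N + transpose N)) *v t) = N \<bullet> outer t"
proof -
  have "((1/2) *\<^sub>R (N + transpose N)) *v t = (1/2) *\<^sub>R (N *v t + transpose N *v t)"
    by (simp add: matrix_vector_mult_def vec_eq_iff sum_distrib_left sum.distrib algebra_simps)
  then have "t \<bullet> (((1/2) *\<^sub>R (N + transpose N)) *v t)
      = (1/2) * (t \<bullet> (N *v t) + t \<bullet> (transpose N *v t))"
    by (simp only: inner_add_right inner_scaleR_right)
  then show ?thesis
    by (simp only: quadratic_form_transpose inner_outer) simp
qed

lemma inj_outer_hat: "inj (\<lambda>x. outer (hat x))"
proof (rule injI)
  fix x y :: "real^'d" assume "outer (hat x) = outer (hat y)"
  then have "outer (hat x) $ Some k $ None = outer (hat y) $ Some k $ None" for k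
    by simp
  then show "x = y"
    by (simp add: outer_def vec_eq_iff)
qed

lemma outer_hat_neq_uminus: "outer (hat x) \<noteq> - outer (hat y)"
proof
  assume "outer (hat x) = - outer (hat y)"
  then have "outer (hat x) $ None $ None = (- outer (hat y)) $ None $ None"
    by simp
  then show False
    by (simp add: outer_def)
qed

text \<open>Gordan's alternative, in the space of (d+1)\<times>(d+1) matrices.\<close>
lemma zero_in_convex_hull_outer_if_not_separated:
  fixes A B :: "(real^'d) set"
  assumes "finite A" "finite B" and "\<not> strictly_separated_by_quadric A B"
  shows "0 \<in> convex hull ((\<lambda>a. outer (hat a)) ` A \<union> (\<lambda>b. - outer (hat b)) ` B)"
    (is "0 \<in> convex hull ?V")
proof (rule ccontr)
  assume "0 \<notin> convex hull ?V"
  moreover have "closed (convex hull ?V)"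
    using assms(1,2) by (simp add: compact_imp_closed finite_imp_compact_convex_hull)
  ultimately obtain N b where "0 < b" and N: "\<And>v. v \<in> convex hull ?V \<Longrightarrow> N \<bullet> v > b"
    using separating_hyperplane_closed_0[OF convex_convex_hull] by blast
  have pos: "N \<bullet> v > 0" if "v \<in> ?V" for v
    using N[OF hull_inc[OF that]] \<open>0 < b\<close> by linarith
  define M where "M = (1/2) *\<^sub>R (N + transpose N)"
  have "strictly_separated_by_quadric A B"
    unfolding strictly_separated_by_quadric_def
  proof (intro exI[of _ M] conjI ballI)
    show "transpose M = M"
      by (simp add: M_def transpose_def vec_eq_iff)
    show "hat b \<bullet> (M *v hat b) < 0" if "b \<in> B" for b
    proof -
      have "- outer (hat b) \<in> ?V"
        using that by blast
      from pos[OF this] show ?thesis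
        by (simp add: M_def quadratic_form_symmetrize)
    qed
    show "0 < hat a \<bullet> (M *v hat a)" if "a \<in> A" for a
    proof -
      have "outer (hat a) \<in> ?V"
        using that by blast
      from pos[OF this] show ?thesis
        by (simp add: M_def quadratic_form_symmetrize)
    qed
  qed
  with assms(3) show False ..
qed

lemma general_positionD:
  fixes x :: "'a \<Rightarrow> real^'d"
  assumes "general_position S x" and "T \<subseteq> S" "2 \<le> card T" "card T \<le> CARD('d) + 1"
  shows "inj_on x T \<and> aff_dim (x ` T) = int (card T) - 1"
proof -
  have "\<forall>T\<subseteq>S. 2 \<le> card T \<and> card T \<le> CARD('d) + 1 \<longrightarrow>
      inj_on x T \<and> aff_dim (x ` T) = int (card T) - 1"
    using assms(1) unfolding general_position_def .
  then have "T \<subseteq> S \<longrightarrow> 2 \<le> card T \<and> card T \<le> CARD('d) + 1 \<longrightarrow>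
      inj_on x T \<and> aff_dim (x ` T) = int (card T) - 1"
    by (rule spec)
  with assms(2-4) show ?thesis
    by simp
qed

lemma general_position_inj_on:
  fixes x :: "'a \<Rightarrow> real^'d"
  assumes "general_position S x"
  shows "inj_on x S"
proof (rule inj_onI)
  fix k1 k2 assume k: "k1 \<in> S" "k2 \<in> S" "x k1 = x k2"
  show "k1 = k2"
  proof (rule ccontr)
    assume "k1 \<noteq> k2"
    moreover have "0 < CARD('d)"
      by simp
    ultimately have "inj_on x {k1, k2}"
      using general_positionD[OF assms, of "{k1, k2}"] k(1,2) by simp
    with \<open>k1 \<noteq> k2\<close> k(3) show False
      by simp
  qed
qed

lemma general_position_Inl_Inr_inj_on:
  assumes "general_position (Inl ` I \<union> Inr ` J) (\<lambda>k. case k of Inl i \<Rightarrow> p i | Inr j \<Rightarrow> q j)"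
  shows "inj_on p I" and "inj_on q J"
proof -
  have "inj_on ((\<lambda>k. case k of Inl i \<Rightarrow> p i | Inr j \<Rightarrow> q j) \<circ> Inl) I"
    "inj_on ((\<lambda>k. case k of Inl i \<Rightarrow> p i | Inr j \<Rightarrow> q j) \<circ> Inr) J"
    using general_position_inj_on[OF assms] by (auto intro!: comp_inj_on intro: inj_on_subset)
  then show "inj_on p I" "inj_on q J"
    by (simp_all add: comp_def)
qed

text \<open>At most d points in general position lie on a hyperplane, and they are affinely
  independent.\<close>
lemma general_position_in_hyperplane_notin_affine_hull:
  fixes x :: "'a \<Rightarrow> real^'d"
  assumes gp: "general_position S x" and "U \<subseteq> S" "finite U" "u \<in> U"
    and "w \<noteq> 0" and hyperplane: "x ` U \<subseteq> {y. w \<bullet> y = c}"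
  shows "x u \<notin> affine hull (x ` (U - {u}))"
proof -
  have card_le: "card U \<le> CARD('d)"
  proof (rule ccontr)
    assume "\<not> ?thesis"
    then obtain T where T: "T \<subseteq> U" "card T = CARD('d) + 1"
      by (metis obtain_subset_with_card_n not_less_eq_eq Suc_eq_plus1)
    then have "aff_dim (x ` T) = int CARD('d)"
      using general_positionD[OF gp, of T] \<open>U \<subseteq> S\<close> by simp
    moreover have "aff_dim (x ` T) \<le> aff_dim {y. w \<bullet> y = c}"
      using T(1) hyperplane by (intro aff_dim_subset) auto
    ultimately show False
      using \<open>w \<noteq> 0\<close> by simp
  qed
  show ?thesis
  proof (cases "card U = 1")
    case True
    then have "U - {u} = {}"
      using \<open>u \<in> U\<close> by (auto simp: card_1_singleton_iff)
    then show ?thesis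
      by (simp only: image_empty affine_hull_empty empty_iff not_False_eq_True)
  next
    case False
    moreover have "card U \<noteq> 0"
      using \<open>u \<in> U\<close> \<open>finite U\<close> by auto
    ultimately have "2 \<le> card U"
      by linarith
    then have inj: "inj_on x U" and "aff_dim (x ` U) = int (card U) - 1"
      using general_positionD[OF gp \<open>U \<subseteq> S\<close>] card_le by auto
    then have "\<not> affine_dependent (x ` U)"
      using \<open>finite U\<close> by (simp add: affine_independent_iff_card card_image)
    then have "x u \<notin> affine hull (x ` U - {x u})"
      using \<open>u \<in> U\<close> unfolding affine_dependent_def by blast
    moreover have "x ` U - {x u} = x ` (U - {u})"
      using inj \<open>u \<in> U\<close> by (auto simp: inj_on_def)
    ultimately show ?thesis by simp
  qed
qed

lemma sum_weighted_squares_eq_0_iff: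
  fixes w f :: "'a \<Rightarrow> real"
  assumes "finite S" and "\<And>s. s \<in> S \<Longrightarrow> 0 \<le> w s"
  shows "(\<Sum>s\<in>S. w s * (f s)\<^sup>2) = 0 \<longleftrightarrow> (\<forall>s\<in>S. 0 < w s \<longrightarrow> f s = 0)"
  using assms by (subst sum_nonneg_eq_0_iff) (auto simp: less_le)


text \<open>The dual certificate to a separating quadric: every quadratic form has the same weighted
  sum over p ` I and over q ` J.\<close>
locale equal_quadric_moments =
  fixes p q :: "nat \<Rightarrow> real^'d" and I J :: "nat set" and la mu :: "nat \<Rightarrow> real"
  assumes finite_I: "finite I" and finite_J: "finite J"
    and la_nonneg: "a \<in> I \<Longrightarrow> 0 \<le> la a" and mu_nonneg: "b \<in> J \<Longrightarrow> 0 \<le> mu b"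
    and weights_sum: "sum la I + sum mu J = 1"
    and moments_eq: "(\<Sum>a\<in>I. la a *\<^sub>R outer (hat (p a))) = (\<Sum>b\<in>J. mu b *\<^sub>R outer (hat (q b)))"
begin

definition supp_p :: "nat set" where
  "supp_p = {a \<in> I. 0 < la a}"

definition supp_q :: "nat set" where
  "supp_q = {b \<in> J. 0 < mu b}"

lemma supp_p_subset: "supp_p \<subseteq> I" and supp_q_subset: "supp_q \<subseteq> J"
  by (auto simp: supp_p_def supp_q_def)

lemma moments_bilinear:
  "(\<Sum>a\<in>I. la a * ((s \<bullet> hat (p a)) * (t \<bullet> hat (p a))))
     = (\<Sum>b\<in>J. mu b * ((s \<bullet> hat (q b)) * (t \<bullet> hat (q b))))"
  using arg_cong[OF moments_eq, of "inner (\<chi> i j. s $ i * t $ j)"]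
  by (simp add: inner_sum_right inner_outer_bilinear)

lemma moments_square: "(\<Sum>a\<in>I. la a * (t \<bullet> hat (p a))\<^sup>2) = (\<Sum>b\<in>J. mu b * (t \<bullet> hat (q b))\<^sup>2)"
  using moments_bilinear[of t t] by (simp add: power2_eq_square)

lemma vanishes_on_supp_p_iff_supp_q:
  "(\<forall>a\<in>supp_p. t \<bullet> hat (p a) = 0) \<longleftrightarrow> (\<forall>b\<in>supp_q. t \<bullet> hat (q b) = 0)"
  using moments_square[of t] la_nonneg mu_nonneg
    sum_weighted_squares_eq_0_iff[OF finite_I, of la "\<lambda>a. t \<bullet> hat (p a)"]
    sum_weighted_squares_eq_0_iff[OF finite_J, of mu "\<lambda>b. t \<bullet> hat (q b)"]
  by (auto simp: supp_p_def supp_q_def)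

lemma supports_nonempty: "supp_p \<noteq> {} \<or> supp_q \<noteq> {}"
proof (rule ccontr)
  assume "\<not> ?thesis"
  then have "\<forall>a\<in>I. la a = 0" "\<forall>b\<in>J. mu b = 0"
    using la_nonneg mu_nonneg by (force simp: supp_p_def supp_q_def)+
  with weights_sum show False by simp
qed

text \<open>If t vanished on all support points, general position would make them affinely
  independent in the hyperplane t = 0; but a functional vanishing on all of them except one point
  of one side vanishes on the whole other side, hence also on that point.\<close>
lemma functional_vanishing_on_supp_p_eq_0:
  assumes gp: "general_position (Inl ` I \<union> Inr ` J) (\<lambda>k. case k of Inl i \<Rightarrow> p i | Inr j \<Rightarrow> q j)"
    and vanish_p: "\<forall>a\<in>supp_p. t \<bullet> hat (p a) = 0"
  shows "t = 0"
proof (rule ccontr)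
  assume "t \<noteq> 0"
  define x where "x = (\<lambda>k. case k of Inl i \<Rightarrow> p i | Inr j \<Rightarrow> q j)"
  define U where "U = Inl ` supp_p \<union> Inr ` supp_q"
  have "U \<subseteq> Inl ` I \<union> Inr ` J" "finite U" "U \<noteq> {}"
    using supp_p_subset supp_q_subset finite_I finite_J supports_nonempty
    by (auto simp: U_def intro: finite_subset)
  have vanish_q: "\<forall>b\<in>supp_q. t \<bullet> hat (q b) = 0"
    using vanish_p vanishes_on_supp_p_iff_supp_q by blast
  have vanish: "t \<bullet> hat (x u) = 0" if "u \<in> U" for u
    using that vanish_p vanish_q by (auto simp: U_def x_def)
  then have hyperplane: "x ` U \<subseteq> {y. lin_part t \<bullet> y = - t $ None}"
    by (auto simp: inner_hat eq_neg_iff_add_eq_0)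
  obtain u0 where "u0 \<in> U"
    using \<open>U \<noteq> {}\<close> by blast
  have "lin_part t \<noteq> 0"
    using vanish[OF \<open>u0 \<in> U\<close>] \<open>t \<noteq> 0\<close> by (auto simp: inner_hat vec_option_eq_0_iff)
  then have "x u0 \<notin> affine hull (x ` (U - {u0}))"
    using general_position_in_hyperplane_notin_affine_hull[OF gp[folded x_def]]
      \<open>U \<subseteq> _\<close> \<open>finite U\<close> \<open>u0 \<in> U\<close> hyperplane by blast
  then obtain s where s_u0: "s \<bullet> hat (x u0) \<noteq> 0" and s_rest: "\<And>y. y \<in> x ` (U - {u0}) \<Longrightarrow> s \<bullet> hat y = 0"
    using hat_functional_separating_point by blast
  show False
  proof (cases u0)
    case (Inl a0)
    then have "\<forall>b\<in>supp_q. s \<bullet> hat (q b) = 0"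
      using s_rest by (force simp: U_def x_def)
    then show False
      using s_u0 Inl \<open>u0 \<in> U\<close> vanishes_on_supp_p_iff_supp_q by (auto simp: U_def x_def)
  next
    case (Inr b0)
    then have "\<forall>a\<in>supp_p. s \<bullet> hat (p a) = 0"
      using s_rest by (force simp: U_def x_def)
    then show False
      using s_u0 Inr \<open>u0 \<in> U\<close> vanishes_on_supp_p_iff_supp_q by (auto simp: U_def x_def)
  qed
qed

lemma affine_hull_supp_p:
  assumes "general_position (Inl ` I \<union> Inr ` J) (\<lambda>k. case k of Inl i \<Rightarrow> p i | Inr j \<Rightarrow> q j)"
  shows "affine hull (p ` supp_p) = UNIV"
  using functional_vanishing_on_supp_p_eq_0[OF assms] by (auto simp: affine_hull_eq_UNIV_iff_hat)

lemma affine_hull_supp_q: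
  assumes "general_position (Inl ` I \<union> Inr ` J) (\<lambda>k. case k of Inl i \<Rightarrow> p i | Inr j \<Rightarrow> q j)"
  shows "affine hull (q ` supp_q) = UNIV"
  using functional_vanishing_on_supp_p_eq_0[OF assms] vanishes_on_supp_p_iff_supp_q
  by (auto simp: affine_hull_eq_UNIV_iff_hat)

end

lemma equal_quadric_moments_if_not_separated:
  fixes p q :: "nat \<Rightarrow> real^'d"
  assumes "finite I" "finite J" "inj_on p I" "inj_on q J"
    and "\<not> strictly_separated_by_quadric (p ` I) (q ` J)"
  obtains la mu where "equal_quadric_moments p q I J la mu"
proof -
  define f where "f x = outer (hat x)" for x :: "real^'d"
  define g where "g x = - outer (hat x)" for x :: "real^'d"
  define V where "V = (\<lambda>a. f (p a)) ` I \<union> (\<lambda>b. g (q b)) ` J"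
  have "finite V"
    using assms(1,2) by (simp add: V_def)
  have "0 \<in> convex hull V"
    using zero_in_convex_hull_outer_if_not_separated[OF _ _ assms(5)] assms(1,2)
    by (simp add: V_def f_def g_def image_comp)
  then obtain u where u_nonneg: "\<forall>v\<in>V. 0 \<le> u v" and "sum u V = 1"
    and u_zero: "(\<Sum>v\<in>V. u v *\<^sub>R v) = 0"
    using convex_hull_finite[OF \<open>finite V\<close>] by blast
  have "inj f" "inj g"
    using inj_outer_hat by (auto simp: f_def g_def inj_def)
  then have "inj_on f (p ` I)" "inj_on g (q ` J)"
    by (auto intro: inj_on_subset)
  then have inj: "inj_on (\<lambda>a. f (p a)) I" "inj_on (\<lambda>b. g (q b)) J"
    using comp_inj_on[OF assms(3)] comp_inj_on[OF assms(4)] by (simp_all add: o_def)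
  have "(\<lambda>a. f (p a)) ` I \<inter> (\<lambda>b. g (q b)) ` J = {}"
    using outer_hat_neq_uminus by (auto simp: f_def g_def)
  then have sum_V: "(\<Sum>v\<in>V. h v) = (\<Sum>a\<in>I. h (f (p a))) + (\<Sum>b\<in>J. h (g (q b)))"
    for h :: "_ \<Rightarrow> 'z::comm_monoid_add"
    using assms(1,2) by (simp add: V_def sum.union_disjoint sum.reindex[OF inj(1)] sum.reindex[OF inj(2)])
  define la where "la a = u (f (p a))" for a
  define mu where "mu b = u (g (q b))" for b
  show ?thesis
  proof (rule that, unfold_locales)
    show "a \<in> I \<Longrightarrow> 0 \<le> la a" "b \<in> J \<Longrightarrow> 0 \<le> mu b" for a b
      using u_nonneg by (auto simp: V_def la_def mu_def)
    show "sum la I + sum mu J = 1"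
      using \<open>sum u V = 1\<close> by (simp add: sum_V la_def mu_def)
    have "(\<Sum>a\<in>I. la a *\<^sub>R outer (hat (p a))) - (\<Sum>b\<in>J. mu b *\<^sub>R outer (hat (q b))) = 0"
      using u_zero by (simp add: sum_V la_def mu_def f_def g_def sum_negf)
    then show "(\<Sum>a\<in>I. la a *\<^sub>R outer (hat (p a))) = (\<Sum>b\<in>J. mu b *\<^sub>R outer (hat (q b)))"
      by simp
  qed (use assms(1,2) in auto)
qed

lemma dist_sq_eq_inner: "(dist x y)\<^sup>2 = (x - y) \<bullet> (x - y)"
  by (simp add: dist_norm power2_norm_eq_inner)

lemma dist_sq_eq_sum: "(dist x y)\<^sup>2 = (\<Sum>c\<in>UNIV. (x $ c - y $ c)\<^sup>2)"
  unfolding dist_sq_eq_inner by (simp add: inner_vec_def power2_eq_square)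

lemma sqdistD_commute: "sqdistD D x y = sqdistD D y x"
  by (simp add: sqdistD_def power2_commute)

text \<open>The quadratic form of B vanishes on X - Y. For y1, y2 \<in> Y the difference of its values at
  x - y1 and x - y2 is affine in x, so it vanishes identically; this kills B on Y - Y, and an
  affine function of y then kills B.\<close>
lemma isometric_if_isometric_between_spanning_sets:
  fixes l :: "nat \<Rightarrow> real^'d"
  assumes span_X: "affine hull X = UNIV" and span_Y: "affine hull Y = UNIV"
    and iso_XY: "\<And>x y. x \<in> X \<Longrightarrow> y \<in> Y \<Longrightarrow> (\<Sum>k<D. (l k \<bullet> (x - y))\<^sup>2) = (x - y) \<bullet> (x - y)"
  shows "(\<Sum>k<D. (l k \<bullet> v)\<^sup>2) = v \<bullet> v"
proof -
  define B where "B v = (\<Sum>k<D. (l k \<bullet> v) *\<^sub>R l k) - v" for v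
  have B_inner: "u \<bullet> B v = (\<Sum>k<D. (l k \<bullet> u) * (l k \<bullet> v)) - u \<bullet> v" for u v
    by (simp add: B_def inner_diff_right inner_sum_right mult_ac inner_commute)
  have B_sym: "u \<bullet> B v = v \<bullet> B u" for u v
    by (simp add: B_inner mult_ac inner_commute)
  have B_diff: "B (u - v) = B u - B v" for u v
    by (simp add: B_def inner_diff_right scaleR_diff_left sum_subtractf)
  have B_zero_XY: "(x - y) \<bullet> B (x - y) = 0" if "x \<in> X" "y \<in> Y" for x y
    using iso_XY[OF that] by (simp add: B_inner power2_eq_square)
  have B_Y: "B (y1 - y2) = 0" if "y1 \<in> Y" "y2 \<in> Y" for y1 y2
  proof -
    have "(-2 *\<^sub>R B (y1 - y2)) \<bullet> x + (y1 \<bullet> B y1 - y2 \<bullet> B y2) = 0" if "x \<in> X" for x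
    proof -
      have "(x - y1) \<bullet> B (x - y1) - (x - y2) \<bullet> B (x - y2) = 0"
        using B_zero_XY \<open>x \<in> X\<close> \<open>y1 \<in> Y\<close> \<open>y2 \<in> Y\<close> by simp
      then show ?thesis
        using B_sym[of x y1] B_sym[of x y2]
        by (simp add: B_diff inner_commute[of "B _" x] algebra_simps)
    qed
    from affine_function_vanishing_on_spanning_set(1)[OF span_X this] show ?thesis by simp
  qed
  have "B u = 0" for u
  proof -
    obtain y0 where "y0 \<in> Y"
      using span_Y by fastforce
    have "B u \<bullet> y + (- (B u \<bullet> y0)) = 0" if "y \<in> Y" for y
      using B_Y[OF that \<open>y0 \<in> Y\<close>] B_sym[of u "y - y0"] by (simp add: inner_diff_right inner_commute)
    from affine_function_vanishing_on_spanning_set(1)[OF span_Y this] show ?thesis .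
  qed
  then show ?thesis
    using B_inner[of v v] by (simp add: power2_eq_square)
qed

text \<open>Expanding the squares, the defect z - (l \<bullet> x + c) enters the distance condition through an
  affine function of y, which vanishes on the spanning set Y.\<close>
lemma coordinates_determined_by_distances:
  fixes l :: "nat \<Rightarrow> real^'d"
  assumes iso: "\<And>v. (\<Sum>k<D. (l k \<bullet> v)\<^sup>2) = v \<bullet> v" and span_Y: "affine hull Y = UNIV"
    and dists: "\<And>y. y \<in> Y \<Longrightarrow> (\<Sum>k<D. (z k - (l k \<bullet> y + c k))\<^sup>2) = (x - y) \<bullet> (x - y)"
    and "k < D"
  shows "z k = l k \<bullet> x + c k"
proof -
  define e where "e k = z k - (l k \<bullet> x + c k)" for k
  define W where "W = (\<Sum>k<D. e k *\<^sub>R l k)"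
  have W_inner: "W \<bullet> v = (\<Sum>k<D. e k * (l k \<bullet> v))" for v
    by (simp add: W_def inner_sum_left)
  have "(-2 *\<^sub>R W) \<bullet> y + ((\<Sum>k<D. (e k)\<^sup>2) + 2 * (W \<bullet> x)) = 0" if "y \<in> Y" for y
  proof -
    have "z k - (l k \<bullet> y + c k) = e k + l k \<bullet> (x - y)" for k
      by (simp add: e_def inner_diff_right)
    then have "(\<Sum>k<D. (e k + l k \<bullet> (x - y))\<^sup>2) = (\<Sum>k<D. (l k \<bullet> (x - y))\<^sup>2)"
      using dists[OF that] iso[of "x - y"] by simp
    then have "(\<Sum>k<D. (e k)\<^sup>2) + 2 * (\<Sum>k<D. e k * (l k \<bullet> (x - y))) = 0"
      by (simp add: power2_sum sum.distrib sum_distrib_left mult_ac)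
    then show ?thesis
      using W_inner[of "x - y"] by (simp add: algebra_simps)
  qed
  from affine_function_vanishing_on_spanning_set[OF span_Y this]
  have "(\<Sum>k<D. (e k)\<^sup>2) = 0"
    by simp
  with \<open>k < D\<close> show ?thesis
    by (simp add: sum_nonneg_eq_0_iff e_def)
qed

lemma sqdistD_affine_images:
  fixes l :: "nat \<Rightarrow> real^'d"
  assumes iso: "\<And>v. (\<Sum>k<D. (l k \<bullet> v)\<^sup>2) = v \<bullet> v"
    and "\<And>k. k < D \<Longrightarrow> z k = l k \<bullet> x + c k" and "\<And>k. k < D \<Longrightarrow> z' k = l k \<bullet> y + c k"
  shows "sqdistD D z z' = (dist x y)\<^sup>2"
proof -
  have "sqdistD D z z' = (\<Sum>k<D. (l k \<bullet> (x - y))\<^sup>2)"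
    unfolding sqdistD_def using assms(2,3) by (intro sum.cong) (simp_all add: inner_diff_right)
  then show ?thesis
    by (simp add: iso dist_sq_eq_inner)
qed


locale spanning_quadric_moments = equal_quadric_moments p q I J la mu
  for p q :: "nat \<Rightarrow> real^'d" and I J la mu +
  assumes span_p: "affine hull (p ` supp_p) = UNIV" and span_q: "affine hull (q ` supp_q) = UNIV"
begin

definition moment_map :: "real^('d option) \<Rightarrow> real^('d option)" where
  "moment_map t = (\<Sum>b\<in>J. (mu b * (t \<bullet> hat (q b))) *\<^sub>R hat (q b))"

lemma linear_moment_map: "linear moment_map"
  unfolding moment_map_def
  by (rule linearI) (simp_all add: sum.distrib algebra_simps scaleR_sum_right)

lemma inner_moment_map: "s \<bullet> moment_map t = (\<Sum>b\<in>J. mu b * ((t \<bullet> hat (q b)) * (s \<bullet> hat (q b))))"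
  unfolding moment_map_def by (simp add: inner_sum_right mult_ac)

lemma bij_moment_map: "bij moment_map"
proof -
  have "t = 0" if "moment_map t = 0" for t
  proof -
    have "(\<Sum>b\<in>J. mu b * (t \<bullet> hat (q b))\<^sup>2) = 0"
      using inner_moment_map[of t t] that by (simp add: power2_eq_square)
    then have "\<forall>y\<in>q ` supp_q. t \<bullet> hat y = 0"
      using sum_weighted_squares_eq_0_iff[OF finite_J, of mu] mu_nonneg by (auto simp: supp_q_def)
    with span_q show ?thesis
      by (simp add: affine_hull_eq_UNIV_iff_hat)
  qed
  then have "inj moment_map"
    using linear_moment_map by (simp add: linear_injective_0)
  then show ?thesis
    using linear_inj_imp_surj[OF linear_moment_map] by (simp add: bij_def)
qed

text \<open>affine_fit y is the affine function (as a vector acting on hat vectors) fitting the values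
  y b at the points q b best in the weighted least-squares sense; fit_vec b is its response to the
  unit value at b.\<close>
definition fit_vec :: "nat \<Rightarrow> real^('d option)" where
  "fit_vec b = inv moment_map (mu b *\<^sub>R hat (q b))"

definition affine_fit :: "(nat \<Rightarrow> real) \<Rightarrow> real^('d option)" where
  "affine_fit y = (\<Sum>b\<in>J. y b *\<^sub>R fit_vec b)"

lemma moment_map_fit_vec: "moment_map (fit_vec b) = mu b *\<^sub>R hat (q b)"
  using bij_moment_map by (simp add: fit_vec_def bij_is_surj surj_f_inv_f)

lemma moment_map_affine_fit: "moment_map (affine_fit y) = (\<Sum>b\<in>J. (y b * mu b) *\<^sub>R hat (q b))"
  by (simp add: affine_fit_def linear_sum[OF linear_moment_map] linear_scale[OF linear_moment_map]
      moment_map_fit_vec o_def)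

lemma affine_fit_affine: "affine_fit (\<lambda>b. t \<bullet> hat (q b)) = t"
proof -
  have "moment_map (affine_fit (\<lambda>b. t \<bullet> hat (q b))) = moment_map t"
    unfolding moment_map_affine_fit by (simp add: moment_map_def mult_ac)
  then show ?thesis
    using bij_is_inj[OF bij_moment_map] by (simp add: inj_eq)
qed

lemma affine_fit_normal_eq:
  "(\<Sum>b\<in>J. mu b * (y b * (affine_fit y \<bullet> hat (q b)))) = (\<Sum>b\<in>J. mu b * (affine_fit y \<bullet> hat (q b))\<^sup>2)"
proof -
  have "affine_fit y \<bullet> moment_map (affine_fit y) = (\<Sum>b\<in>J. mu b * (y b * (affine_fit y \<bullet> hat (q b))))"
    by (simp add: moment_map_affine_fit inner_sum_right mult_ac)
  moreover have "affine_fit y \<bullet> moment_map (affine_fit y) = (\<Sum>b\<in>J. mu b * (affine_fit y \<bullet> hat (q b))\<^sup>2)"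
    by (simp add: inner_moment_map power2_eq_square)
  ultimately show ?thesis by simp
qed

definition stress :: "nat \<Rightarrow> nat \<Rightarrow> real" where
  "stress a b = la a * (hat (p a) \<bullet> fit_vec b)"

lemma stress_row: "(\<Sum>b\<in>J. stress a b * y b) = la a * (affine_fit y \<bullet> hat (p a))"
  by (simp add: stress_def affine_fit_def inner_sum_right sum_distrib_left inner_commute mult_ac)

lemma stress_row_sum: "(\<Sum>b\<in>J. stress a b) = la a"
  using stress_row[of a "\<lambda>_. 1"] affine_fit_affine[of "axis None 1"] by (simp add: inner_axis')

lemma stress_col_sum: "(\<Sum>a\<in>I. stress a b) = mu b"
proof -
  have "(\<Sum>a\<in>I. stress a b) = (\<Sum>a\<in>I. la a * ((axis None 1 \<bullet> hat (p a)) * (fit_vec b \<bullet> hat (p a))))"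
    by (simp add: stress_def inner_axis inner_axis' inner_commute)
  also have "\<dots> = (\<Sum>b'\<in>J. mu b' * ((axis None 1 \<bullet> hat (q b')) * (fit_vec b \<bullet> hat (q b'))))"
    by (rule moments_bilinear)
  also have "\<dots> = axis None 1 \<bullet> moment_map (fit_vec b)"
    by (simp add: inner_moment_map mult_ac)
  also have "\<dots> = mu b"
    by (simp add: moment_map_fit_vec inner_axis')
  finally show ?thesis .
qed

definition stress_energy :: "(nat \<Rightarrow> real) \<Rightarrow> (nat \<Rightarrow> real) \<Rightarrow> real" where
  "stress_energy x y = (\<Sum>a\<in>I. \<Sum>b\<in>J. stress a b * (x a - y b)\<^sup>2)"

text \<open>This identity shows that the stress is positive semidefinite.\<close>
lemma stress_energy_eq:
  "stress_energy x y = (\<Sum>a\<in>I. la a * (x a - affine_fit y \<bullet> hat (p a))\<^sup>2)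
                       + (\<Sum>b\<in>J. mu b * (y b - affine_fit y \<bullet> hat (q b))\<^sup>2)"
proof -
  define f where "f = affine_fit y"
  have "stress_energy x y = (\<Sum>a\<in>I. (x a)\<^sup>2 * (\<Sum>b\<in>J. stress a b))
      - 2 * (\<Sum>a\<in>I. x a * (\<Sum>b\<in>J. stress a b * y b)) + (\<Sum>a\<in>I. \<Sum>b\<in>J. stress a b * (y b)\<^sup>2)"
    by (simp add: stress_energy_def power2_diff algebra_simps sum.distrib sum_subtractf sum_distrib_left)
  also have "(\<Sum>a\<in>I. \<Sum>b\<in>J. stress a b * (y b)\<^sup>2) = (\<Sum>b\<in>J. (y b)\<^sup>2 * (\<Sum>a\<in>I. stress a b))"
    by (subst sum.swap) (simp add: sum_distrib_left mult_ac)
  finally have "stress_energy x y = (\<Sum>a\<in>I. la a * (x a)\<^sup>2)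
      - 2 * (\<Sum>a\<in>I. la a * x a * (f \<bullet> hat (p a))) + (\<Sum>b\<in>J. mu b * (y b)\<^sup>2)"
    by (simp add: stress_row_sum stress_row stress_col_sum f_def, simp add: mult_ac)
  moreover have "(\<Sum>a\<in>I. la a * (x a - f \<bullet> hat (p a))\<^sup>2) + (\<Sum>b\<in>J. mu b * (y b - f \<bullet> hat (q b))\<^sup>2)
      = (\<Sum>a\<in>I. la a * (x a)\<^sup>2) - 2 * (\<Sum>a\<in>I. la a * x a * (f \<bullet> hat (p a)))
        + (\<Sum>a\<in>I. la a * (f \<bullet> hat (p a))\<^sup>2) + (\<Sum>b\<in>J. mu b * (y b)\<^sup>2)
        - 2 * (\<Sum>b\<in>J. mu b * (y b * (f \<bullet> hat (q b)))) + (\<Sum>b\<in>J. mu b * (f \<bullet> hat (q b))\<^sup>2)"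
    by (simp add: power2_diff algebra_simps sum.distrib sum_subtractf sum_distrib_left)
  ultimately show ?thesis
    by (simp add: moments_square affine_fit_normal_eq f_def)
qed

lemma stress_energy_affine: "stress_energy (\<lambda>a. t \<bullet> hat (p a)) (\<lambda>b. t \<bullet> hat (q b)) = 0"
  by (simp add: stress_energy_eq affine_fit_affine)

lemma stress_energy_nonneg: "0 \<le> stress_energy x y"
  unfolding stress_energy_eq using la_nonneg mu_nonneg by (intro add_nonneg_nonneg sum_nonneg) auto

lemma stress_energy_eq_0_imp_affine:
  assumes "stress_energy x y = 0"
  shows "a \<in> supp_p \<Longrightarrow> x a = affine_fit y \<bullet> hat (p a)"
    and "b \<in> supp_q \<Longrightarrow> y b = affine_fit y \<bullet> hat (q b)"
proof -
  have "0 \<le> (\<Sum>a\<in>I. la a * (x a - affine_fit y \<bullet> hat (p a))\<^sup>2)"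
    "0 \<le> (\<Sum>b\<in>J. mu b * (y b - affine_fit y \<bullet> hat (q b))\<^sup>2)"
    using la_nonneg mu_nonneg by (auto intro: sum_nonneg)
  then have "(\<Sum>a\<in>I. la a * (x a - affine_fit y \<bullet> hat (p a))\<^sup>2) = 0"
    "(\<Sum>b\<in>J. mu b * (y b - affine_fit y \<bullet> hat (q b))\<^sup>2) = 0"
    using assms unfolding stress_energy_eq by linarith+
  then show "a \<in> supp_p \<Longrightarrow> x a = affine_fit y \<bullet> hat (p a)"
    and "b \<in> supp_q \<Longrightarrow> y b = affine_fit y \<bullet> hat (q b)"
    using sum_weighted_squares_eq_0_iff[OF finite_I, of la] la_nonneg
      sum_weighted_squares_eq_0_iff[OF finite_J, of mu] mu_nonneg
    by (auto simp: supp_p_def supp_q_def)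
qed

text \<open>Summing the energy over the coordinates turns it into the stress-weighted sum of squared
  bar lengths; these agree with those of (p, q), whose energy vanishes coordinatewise.\<close>
lemma coordinates_affine_on_supports:
  fixes P Q :: "nat \<Rightarrow> nat \<Rightarrow> real"
  assumes bars: "\<And>a b. a \<in> I \<Longrightarrow> b \<in> J \<Longrightarrow> sqdistD D (P a) (Q b) = (dist (p a) (q b))\<^sup>2"
    and "k < D"
  shows "a \<in> supp_p \<Longrightarrow> P a k = affine_fit (\<lambda>b. Q b k) \<bullet> hat (p a)"
    and "b \<in> supp_q \<Longrightarrow> Q b k = affine_fit (\<lambda>b. Q b k) \<bullet> hat (q b)"
proof -
  have swap: "(\<Sum>k\<in>C. \<Sum>a\<in>I. \<Sum>b\<in>J. g k a b) = (\<Sum>a\<in>I. \<Sum>b\<in>J. \<Sum>k\<in>C. g k a b)"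
    for C and g :: "'c \<Rightarrow> nat \<Rightarrow> nat \<Rightarrow> real"
    by (subst sum.swap) (simp add: sum.swap[of _ C])
  have "(\<Sum>k<D. stress_energy (\<lambda>a. P a k) (\<lambda>b. Q b k)) = (\<Sum>a\<in>I. \<Sum>b\<in>J. stress a b * sqdistD D (P a) (Q b))"
    by (simp add: stress_energy_def swap sqdistD_def sum_distrib_left)
  also have "\<dots> = (\<Sum>a\<in>I. \<Sum>b\<in>J. stress a b * (dist (p a) (q b))\<^sup>2)"
    by (simp add: bars)
  also have "\<dots> = (\<Sum>a\<in>I. \<Sum>b\<in>J. \<Sum>c\<in>UNIV. stress a b * (p a $ c - q b $ c)\<^sup>2)"
    by (simp add: dist_sq_eq_sum sum_distrib_left)
  also have "\<dots> = (\<Sum>c\<in>UNIV. stress_energy (\<lambda>a. axis (Some c) 1 \<bullet> hat (p a)) (\<lambda>b. axis (Some c) 1 \<bullet> hat (q b)))"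
    by (simp add: stress_energy_def swap inner_axis')
  also have "\<dots> = 0"
    by (simp only: stress_energy_affine sum.neutral_const)
  finally have "(\<Sum>k<D. stress_energy (\<lambda>a. P a k) (\<lambda>b. Q b k)) = 0" .
  then have "stress_energy (\<lambda>a. P a k) (\<lambda>b. Q b k) = 0"
    using \<open>k < D\<close> stress_energy_nonneg by (simp add: sum_nonneg_eq_0_iff)
  then show "a \<in> supp_p \<Longrightarrow> P a k = affine_fit (\<lambda>b. Q b k) \<bullet> hat (p a)"
    and "b \<in> supp_q \<Longrightarrow> Q b k = affine_fit (\<lambda>b. Q b k) \<bullet> hat (q b)"
    by (auto dest: stress_energy_eq_0_imp_affine)
qed

lemma bar_preserving_affine_isometric_on_supports:
  fixes P Q :: "nat \<Rightarrow> nat \<Rightarrow> real"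
  assumes bars: "\<And>a b. a \<in> I \<Longrightarrow> b \<in> J \<Longrightarrow> sqdistD D (P a) (Q b) = (dist (p a) (q b))\<^sup>2"
  obtains l :: "nat \<Rightarrow> real^'d" and c :: "nat \<Rightarrow> real"
  where "\<And>v. (\<Sum>k<D. (l k \<bullet> v)\<^sup>2) = v \<bullet> v"
    and "\<And>a k. a \<in> supp_p \<Longrightarrow> k < D \<Longrightarrow> P a k = l k \<bullet> p a + c k"
    and "\<And>b k. b \<in> supp_q \<Longrightarrow> k < D \<Longrightarrow> Q b k = l k \<bullet> q b + c k"
proof -
  define l where "l k = lin_part (affine_fit (\<lambda>b. Q b k))" for k
  define c where "c k = affine_fit (\<lambda>b. Q b k) $ None" for k
  have P_supp: "P a k = l k \<bullet> p a + c k" if "a \<in> supp_p" "k < D" for a k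
    using coordinates_affine_on_supports(1)[OF bars that(2,1)] by (simp add: l_def c_def inner_hat)
  have Q_supp: "Q b k = l k \<bullet> q b + c k" if "b \<in> supp_q" "k < D" for b k
    using coordinates_affine_on_supports(2)[OF bars that(2,1)] by (simp add: l_def c_def inner_hat)
  have iso: "(\<Sum>k<D. (l k \<bullet> v)\<^sup>2) = v \<bullet> v" for v
  proof (rule isometric_if_isometric_between_spanning_sets[OF span_p span_q])
    fix x y assume "x \<in> p ` supp_p" "y \<in> q ` supp_q"
    then obtain a b where ab: "a \<in> supp_p" "b \<in> supp_q" and "x = p a" "y = q b"
      by blast
    then have "(\<Sum>k<D. (l k \<bullet> (x - y))\<^sup>2) = sqdistD D (P a) (Q b)"
      unfolding sqdistD_def by (intro sum.cong) (simp_all add: P_supp Q_supp inner_diff_right)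
    also have "\<dots> = (x - y) \<bullet> (x - y)"
      using ab bars supp_p_subset supp_q_subset \<open>x = p a\<close> \<open>y = q b\<close>
      by (auto simp: dist_sq_eq_inner)
    finally show "(\<Sum>k<D. (l k \<bullet> (x - y))\<^sup>2) = (x - y) \<bullet> (x - y)" .
  qed
  show ?thesis
    using iso P_supp Q_supp by (rule that)
qed

lemma universally_rigid:
  assumes "I \<subseteq> {..<n}" "J \<subseteq> {..<m}"
  shows "bip_universally_rigid n m p q"
  unfolding bip_universally_rigid_def
proof (intro allI impI)
  fix D and P Q :: "nat \<Rightarrow> nat \<Rightarrow> real"
  assume bars: "\<forall>i<n. \<forall>j<m. sqdistD D (P i) (Q j) = (dist (p i) (q j))\<^sup>2"
  then have "sqdistD D (P a) (Q b) = (dist (p a) (q b))\<^sup>2" if "a \<in> I" "b \<in> J" for a b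
    using assms that by blast
  then obtain l c where iso: "\<And>v. (\<Sum>k<D. (l k \<bullet> v)\<^sup>2) = v \<bullet> v"
    and P_supp: "\<And>a k. a \<in> supp_p \<Longrightarrow> k < D \<Longrightarrow> P a k = l k \<bullet> p a + c k"
    and Q_supp: "\<And>b k. b \<in> supp_q \<Longrightarrow> k < D \<Longrightarrow> Q b k = l k \<bullet> q b + c k"
    using bar_preserving_affine_isometric_on_supports by blast
  have P_all: "P i k = l k \<bullet> p i + c k" if "i < n" "k < D" for i k
  proof (rule coordinates_determined_by_distances[OF iso span_q _ that(2)])
    fix y assume "y \<in> q ` supp_q"
    then obtain b where "b \<in> supp_q" "y = q b" by blast
    then have "(\<Sum>k<D. (P i k - (l k \<bullet> y + c k))\<^sup>2) = sqdistD D (P i) (Q b)"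
      unfolding sqdistD_def by (intro sum.cong) (simp_all add: Q_supp)
    also have "\<dots> = (p i - y) \<bullet> (p i - y)"
      using bars \<open>i < n\<close> \<open>b \<in> supp_q\<close> \<open>y = q b\<close> assms(2) supp_q_subset
      by (auto simp: dist_sq_eq_inner)
    finally show "(\<Sum>k<D. (P i k - (l k \<bullet> y + c k))\<^sup>2) = (p i - y) \<bullet> (p i - y)" .
  qed
  have Q_all: "Q j k = l k \<bullet> q j + c k" if "j < m" "k < D" for j k
  proof (rule coordinates_determined_by_distances[OF iso span_p _ that(2)])
    fix x assume "x \<in> p ` supp_p"
    then obtain a where "a \<in> supp_p" "x = p a" by blast
    then have "(\<Sum>k<D. (Q j k - (l k \<bullet> x + c k))\<^sup>2) = sqdistD D (Q j) (P a)"
      unfolding sqdistD_def by (intro sum.cong) (simp_all add: P_supp)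
    also have "\<dots> = (dist x (q j))\<^sup>2"
      using bars \<open>j < m\<close> \<open>a \<in> supp_p\<close> \<open>x = p a\<close> assms(1) supp_p_subset
      by (auto simp: sqdistD_commute[of D "Q j"])
    also have "\<dots> = (q j - x) \<bullet> (q j - x)"
      by (simp only: dist_commute[of x] dist_sq_eq_inner)
    finally show "(\<Sum>k<D. (Q j k - (l k \<bullet> x + c k))\<^sup>2) = (q j - x) \<bullet> (q j - x)" .
  qed
  show "(\<forall>i<n. \<forall>i'<n. sqdistD D (P i) (P i') = (dist (p i) (p i'))\<^sup>2) \<and>
      (\<forall>j<m. \<forall>j'<m. sqdistD D (Q j) (Q j') = (dist (q j) (q j'))\<^sup>2) \<and>
      (\<forall>i<n. \<forall>j<m. sqdistD D (P i) (Q j) = (dist (p i) (q j))\<^sup>2)"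
    using sqdistD_affine_images[OF iso] P_all Q_all bars by blast
qed

end

theorem mainTheorem5:
  fixes n m :: nat and p q :: "nat \<Rightarrow> real^'d" and I J :: "nat set"
  assumes "I \<subseteq> {..<n}" and "J \<subseteq> {..<m}"
    and "general_position (Inl ` I \<union> Inr ` J) (\<lambda>k. case k of Inl i \<Rightarrow> p i | Inr j \<Rightarrow> q j)"
    and "\<not> strictly_separated_by_quadric (p ` I) (q ` J)"
  shows "bip_universally_rigid n m p q \<and>
         affine hull (p ` {..<n}) = UNIV \<and> affine hull (q ` {..<m}) = UNIV"
proof -
  have "finite I" "finite J"
    using assms(1,2) finite_subset by blast+
  then obtain la mu where "equal_quadric_moments p q I J la mu"
    using equal_quadric_moments_if_not_separated general_position_Inl_Inr_inj_on[OF assms(3)] assms(4)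
    by blast
  then interpret equal_quadric_moments p q I J la mu .
  interpret spanning_quadric_moments p q I J la mu
    by unfold_locales (fact affine_hull_supp_p[OF assms(3)], fact affine_hull_supp_q[OF assms(3)])
  have "affine hull (p ` supp_p) \<subseteq> affine hull (p ` {..<n})"
    "affine hull (q ` supp_q) \<subseteq> affine hull (q ` {..<m})"
    using supp_p_subset supp_q_subset assms(1,2) by (auto intro!: hull_mono)
  then show ?thesis
    using universally_rigid[OF assms(1,2)] span_p span_q by auto
qed

end
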